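(* Let $\Lambda,\Gamma$ be finite simplicial graphs and $f\colon V(\Lambda)\to V(\Gamma)$ a surjective map which is full (for all adjacent $u_1,u_2$ in $\Gamma$ and all $v_i\in f^{-1}(u_i)$, $v_1,v_2$ are adjacent in $\Lambda$) and satisfies condition $( * )$ (for all distinct non-adjacent $u\neq u'$ in $\Gamma$ and every $v\in f^{-1}(u)$ there is $v'\in f^{-1}(u')$ not adjacent to $v$). Suppose every fibre $f^{-1}(u)$ is a clique of $\Lambda$. Then the map sending each $u\in V(\Gamma)$ to the product of the elements of $f^{-1}(u)$ in $C(\Lambda)$ extends to an injective group homomorphism $\varphi\colon C(\Gamma)\hookrightarrow C(\Lambda)$, and $\varphi$ is a quasi-isometric embedding with respect to the word metrics given by the vertex generating sets.
   Context: For a finite simplicial graph $\Gamma$, the right-angled Coxeter group is $C(\Gamma)=\langle V(\Gamma)\mid v^2=1\ (v\in V(\Gamma)),\ [u,v]=1 \text{ iff }\{u,v\}\in E(\Gamma)\rangle$. A clique is a set of pairwise adjacent vertices. *)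

theory Defs
  imports Complex_Main "HOL-Algebra.Group"
begin

definition simple_graph :: "'a set \<Rightarrow> ('a \<Rightarrow> 'a \<Rightarrow> bool) \<Rightarrow> bool" where
  "simple_graph V E \<longleftrightarrow> finite V \<and>
     (\<forall>u v. E u v \<longrightarrow> u \<in> V \<and> v \<in> V \<and> u \<noteq> v \<and> E v u)"

definition is_clique :: "'a set \<Rightarrow> ('a \<Rightarrow> 'a \<Rightarrow> bool) \<Rightarrow> 'a set \<Rightarrow> bool" where
  "is_clique V E S \<longleftrightarrow> S \<subseteq> V \<and> (\<forall>u\<in>S. \<forall>v\<in>S. u \<noteq> v \<longrightarrow> E u v)"

inductive racg_step :: "'a set \<Rightarrow> ('a \<Rightarrow> 'a \<Rightarrow> bool) \<Rightarrow> 'a list \<Rightarrow> 'a list \<Rightarrow> bool"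
  for V E where
  cancel: "v \<in> V \<Longrightarrow> racg_step V E (xs @ v # v # ys) (xs @ ys)"
| swap: "u \<in> V \<Longrightarrow> v \<in> V \<Longrightarrow> E u v \<Longrightarrow> racg_step V E (xs @ u # v # ys) (xs @ v # u # ys)"

definition racg_rel :: "'a set \<Rightarrow> ('a \<Rightarrow> 'a \<Rightarrow> bool) \<Rightarrow> 'a list \<Rightarrow> 'a list \<Rightarrow> bool" where
  "racg_rel V E = equivclp (racg_step V E)"

definition racg_class :: "'a set \<Rightarrow> ('a \<Rightarrow> 'a \<Rightarrow> bool) \<Rightarrow> 'a list \<Rightarrow> 'a list set" where
  "racg_class V E w = {w'. w' \<in> lists V \<and> racg_rel V E w w'}"

definition RACG :: "'a set \<Rightarrow> ('a \<Rightarrow> 'a \<Rightarrow> bool) \<Rightarrow> 'a list set monoid" where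
  "RACG V E = \<lparr> carrier = racg_class V E ` lists V,
               mult = (\<lambda>A B. \<Union>{racg_class V E (x @ y) | x y. x \<in> A \<and> y \<in> B}),
               one = racg_class V E [] \<rparr>"

definition racg_gen :: "'a set \<Rightarrow> ('a \<Rightarrow> 'a \<Rightarrow> bool) \<Rightarrow> 'a \<Rightarrow> 'a list set" where
  "racg_gen V E v = racg_class V E [v]"

definition racg_dist :: "'a set \<Rightarrow> ('a \<Rightarrow> 'a \<Rightarrow> bool) \<Rightarrow> 'a list set \<Rightarrow> 'a list set \<Rightarrow> nat" where
  "racg_dist V E g h =
     (LEAST n. \<exists>w \<in> lists V. length w = n \<and> g \<otimes>\<^bsub>RACG V E\<^esub> racg_class V E w = h)"

definition fibre_word :: "('b \<Rightarrow> 'a) \<Rightarrow> 'b set \<Rightarrow> 'a \<Rightarrow> 'b list" where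
  "fibre_word f VL u = (SOME xs. distinct xs \<and> set xs = {v \<in> VL. f v = u})"

end

theory Submission
  imports Defs "HOL-Library.Multiset"
begin

text \<open>Replacing every letter u by a word listing its fibre respects the relations of C(Gamma):
the fibre is a clique, so its word squares to 1, and fibres over adjacent vertices commute
because f is full. A word is reduced if it has no subword
s m s in which m commutes with s; by Tits' solution of the word problem reduced words are
geodesic, which is proved here with heaps of pieces: pushing the letters of a word one at a
time, cancelling a letter that lies on top of the heap, gives a heap that depends only on
the group element and has exactly as many pieces as any reduced representative. Condition
(*) makes the substitution send reduced words to reduced words, so the word length of g
is at most that of its image, which is at most |V(Lambda)| times it. This yields
injectivity and the quasi-isometric bounds.\<close>

section \<open>Words in the generators\<close>

lemma racg_rel_refl [simp]: "racg_rel V E x x"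
  by (simp add: racg_rel_def)

lemma racg_rel_sym: "racg_rel V E x y \<Longrightarrow> racg_rel V E y x"
  unfolding racg_rel_def by (rule equivclp_sym)

lemma racg_rel_trans: "racg_rel V E x y \<Longrightarrow> racg_rel V E y z \<Longrightarrow> racg_rel V E x z"
  unfolding racg_rel_def by (rule equivclp_trans)

lemma racg_rel_map:
  assumes "\<And>x y. racg_step V E x y \<Longrightarrow> racg_rel V' E' (F x) (F y)"
    and "racg_rel V E x y"
  shows "racg_rel V' E' (F x) (F y)"
  using assms(2) unfolding racg_rel_def[of V E]
proof (induction rule: equivclp_induct)
  case (step y z)
  then show ?case using assms(1) racg_rel_sym racg_rel_trans by metis
qed simp

lemma racg_step_context: "racg_step V E x y \<Longrightarrow> racg_step V E (p @ x @ q) (p @ y @ q)"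
proof (induction rule: racg_step.induct)
  case (cancel v xs ys)
  then show ?case using racg_step.cancel[where xs = "p @ xs" and ys = "ys @ q"] by simp
next
  case (swap u v xs ys)
  then show ?case using racg_step.swap[where xs = "p @ xs" and ys = "ys @ q"] by simp
qed

lemma racg_rel_context: "racg_rel V E x y \<Longrightarrow> racg_rel V E (p @ x @ q) (p @ y @ q)"
  by (rule racg_rel_map) (auto simp: racg_rel_def intro: racg_step_context)

lemma racg_rel_append:
  "racg_rel V E a a' \<Longrightarrow> racg_rel V E b b' \<Longrightarrow> racg_rel V E (a @ b) (a' @ b')"
  using racg_rel_context[of V E a a' "[]" b] racg_rel_context[of V E b b' a' "[]"]
  by (auto intro: racg_rel_trans)

lemma racg_rel_cancel: "v \<in> V \<Longrightarrow> racg_rel V E (xs @ v # v # ys) (xs @ ys)"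
  unfolding racg_rel_def by (rule r_into_equivclp) (rule racg_step.cancel)

lemma racg_rel_swap:
  "u \<in> V \<Longrightarrow> v \<in> V \<Longrightarrow> E u v \<Longrightarrow> racg_rel V E (xs @ u # v # ys) (xs @ v # u # ys)"
  unfolding racg_rel_def by (rule r_into_equivclp) (rule racg_step.swap)

lemma racg_rel_commute:
  "s \<in> V \<Longrightarrow> set l \<subseteq> V \<Longrightarrow> \<forall>x\<in>set l. E s x \<Longrightarrow> racg_rel V E (s # l) (l @ [s])"
proof (induction l)
  case (Cons x l)
  have "racg_rel V E (s # x # l) (x # s # l)"
    using racg_rel_swap[of s V x E "[]" l] Cons.prems by simp
  moreover have "racg_rel V E (x # s # l) (x # l @ [s])"
    using racg_rel_context[OF Cons.IH, of "[x]" "[]"] Cons.prems by simp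
  ultimately show ?case by (auto intro: racg_rel_trans)
qed simp

lemma racg_rel_commute_blocks:
  "set l1 \<subseteq> V \<Longrightarrow> set l2 \<subseteq> V \<Longrightarrow> \<forall>x\<in>set l1. \<forall>y\<in>set l2. E x y
   \<Longrightarrow> racg_rel V E (l1 @ l2) (l2 @ l1)"
proof (induction l1)
  case (Cons x l1)
  have "racg_rel V E (x # l1 @ l2) (x # l2 @ l1)"
    using racg_rel_context[OF Cons.IH, of "[x]" "[]"] Cons.prems by simp
  moreover have "racg_rel V E ((x # l2) @ l1) ((l2 @ [x]) @ l1)"
    using racg_rel_context[OF racg_rel_commute[of x V l2 E], of "[]" l1] Cons.prems by simp
  ultimately show ?case by (auto intro: racg_rel_trans)
qed simp

lemma racg_rel_clique_square:
  "set l \<subseteq> V \<Longrightarrow> distinct l \<Longrightarrow> \<forall>x\<in>set l. \<forall>y\<in>set l. x \<noteq> y \<longrightarrow> E x y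
   \<Longrightarrow> racg_rel V E (l @ l) []"
proof (induction l)
  case (Cons x l)
  have "\<forall>y\<in>set l. E x y" using Cons.prems by auto
  then have "racg_rel V E (l @ [x]) (x # l)"
    using racg_rel_sym[OF racg_rel_commute[of x V l E]] Cons.prems by auto
  then have "racg_rel V E (x # l @ x # l) (x # x # l @ l)"
    using racg_rel_context[of V E "l @ [x]" "x # l" "[x]" l] by simp
  moreover have "racg_rel V E (x # x # l @ l) (l @ l)"
    using racg_rel_cancel[of x V E "[]" "l @ l"] Cons.prems by simp
  moreover have "racg_rel V E (l @ l) []" using Cons by auto
  ultimately show ?case by (auto intro: racg_rel_trans)
qed simp

lemma racg_rel_rev_cancel: "set a \<subseteq> V \<Longrightarrow> racg_rel V E (a @ rev a) []"
proof (induction a)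
  case (Cons x a)
  have "racg_rel V E (x # a @ rev a @ [x]) [x, x]"
    using racg_rel_context[OF Cons.IH, of "[x]" "[x]"] Cons.prems by simp
  moreover have "racg_rel V E [x, x] []"
    using racg_rel_cancel[of x V E "[]" "[]"] Cons.prems by simp
  ultimately show ?case by (auto intro: racg_rel_trans)
qed simp

lemma racg_rel_inverse_unique:
  assumes "set y \<subseteq> V" and "racg_rel V E (x @ y) []"
  shows "racg_rel V E x (rev y)"
proof -
  have "racg_rel V E (x @ y @ rev y) x"
    using racg_rel_context[OF racg_rel_rev_cancel[OF assms(1)], where p = x and q = "[]"] by simp
  moreover have "racg_rel V E ((x @ y) @ rev y) (rev y)"
    using racg_rel_context[OF assms(2), of "[]" "rev y"] by simp
  ultimately show ?thesis by (auto intro: racg_rel_trans racg_rel_sym)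
qed

section \<open>The group and its word metric\<close>

lemma racg_class_eq: "racg_rel V E x y \<Longrightarrow> racg_class V E x = racg_class V E y"
  unfolding racg_class_def by (metis racg_rel_trans racg_rel_sym)

lemma racg_class_self: "x \<in> lists V \<Longrightarrow> x \<in> racg_class V E x"
  by (simp add: racg_class_def)

lemma racg_class_eq_iff:
  "x \<in> lists V \<Longrightarrow> racg_class V E x = racg_class V E y \<longleftrightarrow> racg_rel V E x y"
  by (metis mem_Collect_eq racg_class_def racg_class_eq racg_class_self racg_rel_sym)

lemma carrier_RACG: "carrier (RACG V E) = racg_class V E ` lists V"
  by (simp add: RACG_def)

lemma racg_class_mult:
  assumes "a \<in> lists V" "b \<in> lists V"
  shows "racg_class V E a \<otimes>\<^bsub>RACG V E\<^esub> racg_class V E b = racg_class V E (a @ b)"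
proof -
  have "racg_class V E (x @ y) = racg_class V E (a @ b)"
    if "x \<in> racg_class V E a" "y \<in> racg_class V E b" for x y
  proof -
    from that have "racg_rel V E (a @ b) (x @ y)"
      by (simp add: racg_class_def racg_rel_append)
    then show ?thesis by (metis racg_class_eq racg_rel_sym)
  qed
  then have "{racg_class V E (x @ y) | x y. x \<in> racg_class V E a \<and> y \<in> racg_class V E b}
        = {racg_class V E (a @ b)}"
    using racg_class_self[OF assms(1)] racg_class_self[OF assms(2)] by blast
  then show ?thesis by (simp add: RACG_def)
qed

text \<open>Well defined when F respects the relation: the images of all representatives of g
then lie in a single class.\<close>
definition racg_lift ::
    "('a list \<Rightarrow> 'b list) \<Rightarrow> 'a set \<Rightarrow> ('a \<Rightarrow> 'a \<Rightarrow> bool) \<Rightarrow> 'b set \<Rightarrow> ('b \<Rightarrow> 'b \<Rightarrow> bool)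
     \<Rightarrow> 'a list set \<Rightarrow> 'b list set" where
  "racg_lift F V E V' E' g = the_elem ((\<lambda>w. racg_class V' E' (F w)) ` g)"

lemma racg_lift_class:
  assumes "\<And>x y. racg_rel V E x y \<Longrightarrow> racg_rel V' E' (F x) (F y)" and "w \<in> lists V"
  shows "racg_lift F V E V' E' (racg_class V E w) = racg_class V' E' (F w)"
proof -
  have "racg_class V' E' (F w') = racg_class V' E' (F w)" if "w' \<in> racg_class V E w" for w'
    using that assms(1)[of w w'] racg_class_eq[of V' E' "F w" "F w'"] by (simp add: racg_class_def)
  then have "(\<lambda>w'. racg_class V' E' (F w')) ` racg_class V E w = {racg_class V' E' (F w)}"
    using racg_class_self[OF assms(2)] by blast
  then show ?thesis by (simp add: racg_lift_def)
qed

lemma racg_lift_hom: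
  assumes "\<And>x y. racg_rel V E x y \<Longrightarrow> racg_rel V' E' (F x) (F y)"
    and "\<And>a b. F (a @ b) = F a @ F b"
    and "\<And>w. w \<in> lists V \<Longrightarrow> F w \<in> lists V'"
  shows "racg_lift F V E V' E' \<in> hom (RACG V E) (RACG V' E')"
proof (rule homI)
  fix g assume "g \<in> carrier (RACG V E)"
  then obtain a where "a \<in> lists V" "g = racg_class V E a" by (auto simp: carrier_RACG)
  then show "racg_lift F V E V' E' g \<in> carrier (RACG V' E')"
    using racg_lift_class[of V E V' E' F, OF assms(1)] assms(3) by (simp add: carrier_RACG)
next
  fix g h assume "g \<in> carrier (RACG V E)" "h \<in> carrier (RACG V E)"
  then obtain a b where "a \<in> lists V" "g = racg_class V E a" "b \<in> lists V" "h = racg_class V E b"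
    by (auto simp: carrier_RACG)
  then show "racg_lift F V E V' E' (g \<otimes>\<^bsub>RACG V E\<^esub> h)
             = racg_lift F V E V' E' g \<otimes>\<^bsub>RACG V' E'\<^esub> racg_lift F V E V' E' h"
    using racg_lift_class[of V E V' E' F, OF assms(1)] assms(2,3) by (simp add: racg_class_mult)
qed

lemma racg_dist_le:
  assumes "a \<in> lists V" "b \<in> lists V" "w \<in> lists V" and "racg_rel V E (a @ w) b"
  shows "racg_dist V E (racg_class V E a) (racg_class V E b) \<le> length w"
  unfolding racg_dist_def
  using assms racg_class_mult[OF assms(1,3)] racg_class_eq[OF assms(4)] by (intro Least_le) blast

lemma racg_dist_witness:
  assumes "a \<in> lists V" "b \<in> lists V"
  obtains w where "w \<in> lists V" "racg_rel V E (a @ w) b"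
    and "length w = racg_dist V E (racg_class V E a) (racg_class V E b)"
proof -
  let ?P = "\<lambda>n. \<exists>w \<in> lists V. length w = n \<and>
              racg_class V E a \<otimes>\<^bsub>RACG V E\<^esub> racg_class V E w = racg_class V E b"
  have "racg_rel V E (a @ rev a @ b) b"
    using racg_rel_context[OF racg_rel_rev_cancel[of a V E], of "[]" b] assms by auto
  moreover have "rev a @ b \<in> lists V" using assms by auto
  ultimately have "racg_class V E a \<otimes>\<^bsub>RACG V E\<^esub> racg_class V E (rev a @ b) = racg_class V E b"
    using racg_class_mult[OF assms(1)] racg_class_eq by metis
  then have "?P (length (rev a @ b))"
    using assms by (intro bexI[of _ "rev a @ b"]) auto
  then have "?P (LEAST n. ?P n)" by (rule LeastI)
  then obtain w where "w \<in> lists V" "length w = racg_dist V E (racg_class V E a) (racg_class V E b)"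
    "racg_class V E (a @ w) = racg_class V E b"
    using assms(1) by (auto simp: racg_dist_def racg_class_mult)
  with assms(1) that show ?thesis by (simp add: racg_class_eq_iff)
qed

lemma racg_dist_eq_0_iff:
  assumes "g \<in> carrier (RACG V E)" "h \<in> carrier (RACG V E)"
  shows "racg_dist V E g h = 0 \<longleftrightarrow> g = h"
proof -
  obtain a b where ab: "a \<in> lists V" "g = racg_class V E a" "b \<in> lists V" "h = racg_class V E b"
    using assms by (auto simp: carrier_RACG)
  show ?thesis
  proof
    assume "racg_dist V E g h = 0"
    then obtain w where "length w = 0" "racg_rel V E (a @ w) b"
      using racg_dist_witness[of a V b E] ab by metis
    then show "g = h" using ab racg_class_eq by simp
  next
    assume "g = h"
    then have "racg_rel V E (a @ []) b" using ab racg_class_eq_iff[of a V E b] by simp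
    then show "racg_dist V E g h = 0" using racg_dist_le[of a V b "[]" E] ab by simp
  qed
qed

section \<open>Reduced words and heaps of pieces\<close>

definition racg_reduced :: "('a \<Rightarrow> 'a \<Rightarrow> bool) \<Rightarrow> 'a list \<Rightarrow> bool" where
  "racg_reduced E w \<longleftrightarrow> \<not> (\<exists>a s m b. w = a @ s # m @ s # b \<and> (\<forall>x\<in>set m. E s x))"

lemma racg_reduced_prefix: "racg_reduced E (w @ w') \<Longrightarrow> racg_reduced E w"
  unfolding racg_reduced_def by (metis append.assoc append_Cons)

lemma racg_rel_cancel_commuting:
  assumes "s \<in> V" "set m \<subseteq> V" "\<forall>x\<in>set m. E s x"
  shows "racg_rel V E (a @ s # m @ s # b) (a @ m @ b)"
proof -
  have "racg_rel V E (a @ (s # m) @ s # b) (a @ (m @ [s]) @ s # b)"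
    using racg_rel_context[OF racg_rel_commute[of s V m E, OF assms]] by blast
  moreover have "racg_rel V E ((a @ m) @ s # s # b) ((a @ m) @ b)"
    using racg_rel_cancel[OF assms(1)] by blast
  ultimately show ?thesis by (auto intro: racg_rel_trans)
qed

lemma racg_reduced_exists:
  assumes "w \<in> lists V"
  obtains c where "c \<in> lists V" "racg_rel V E w c" "racg_reduced E c"
proof -
  have "\<exists>c. (c \<in> lists V \<and> racg_rel V E w c)
          \<and> (\<forall>d. d \<in> lists V \<and> racg_rel V E w d \<longrightarrow> length c \<le> length d)"
    by (rule ex_has_least_nat[where k = w]) (use assms in simp)
  then obtain c where c: "c \<in> lists V" "racg_rel V E w c"
    and min: "\<And>d. d \<in> lists V \<Longrightarrow> racg_rel V E w d \<Longrightarrow> length c \<le> length d"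
    by blast
  have "racg_reduced E c"
    unfolding racg_reduced_def
  proof
    assume "\<exists>a s m b. c = a @ s # m @ s # b \<and> (\<forall>x\<in>set m. E s x)"
    then obtain a s m b where cs: "c = a @ s # m @ s # b" and "\<forall>x\<in>set m. E s x" by blast
    with c have "racg_rel V E c (a @ m @ b)"
      by (auto intro: racg_rel_cancel_commuting)
    with c have "racg_rel V E w (a @ m @ b)"
      by (blast intro: racg_rel_trans)
    with c cs have "length c \<le> length (a @ m @ b)" by (intro min) auto
    with cs show False by simp
  qed
  with c that show ?thesis by blast
qed

definition depends :: "('a \<Rightarrow> 'a \<Rightarrow> bool) \<Rightarrow> 'a \<Rightarrow> 'a \<Rightarrow> bool" where
  "depends E s t \<longleftrightarrow> s = t \<or> \<not> E s t"

lemma depends_refl [simp]: "depends E s s"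
  by (simp add: depends_def)

lemma depends_sym: "symp E \<Longrightarrow> depends E s t = depends E t s"
  by (auto simp: depends_def dest: sympD)

text \<open>The heap of pieces of c, column by column: column t lists, bottom to top, the letters
of c that do not commute with t, recording only whether each of them is t itself. Pushing
s onto a heap either stacks it, or, if s lies on top, removes that piece (the relation
s s = 1).\<close>
definition heap :: "('a \<Rightarrow> 'a \<Rightarrow> bool) \<Rightarrow> 'a list \<Rightarrow> 'a \<Rightarrow> bool list" where
  "heap E c t = map (\<lambda>x. x = t) (filter (depends E t) c)"

definition on_top :: "('a \<Rightarrow> bool list) \<Rightarrow> 'a \<Rightarrow> bool" where
  "on_top P s \<longleftrightarrow> P s \<noteq> [] \<and> last (P s)"

definition heap_push :: "('a \<Rightarrow> 'a \<Rightarrow> bool) \<Rightarrow> ('a \<Rightarrow> bool list) \<Rightarrow> 'a \<Rightarrow> 'a \<Rightarrow> bool list" where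
  "heap_push E P s t =
     (if depends E s t then (if on_top P s then butlast (P t) else P t @ [s = t]) else P t)"

definition heap_nf :: "('a \<Rightarrow> 'a \<Rightarrow> bool) \<Rightarrow> 'a list \<Rightarrow> 'a \<Rightarrow> bool list" where
  "heap_nf E w = foldl (heap_push E) (\<lambda>t. []) w"

lemma heap_Nil [simp]: "heap E [] t = []"
  by (simp add: heap_def)

lemma heap_snoc:
  "symp E \<Longrightarrow> heap E (c @ [s]) t = (if depends E s t then heap E c t @ [s = t] else heap E c t)"
  by (simp add: heap_def depends_sym)

lemma heap_snoc_cong: "symp E \<Longrightarrow> heap E c = heap E d \<Longrightarrow> heap E (c @ [s]) = heap E (d @ [s])"
  by (simp add: fun_eq_iff heap_snoc)

lemma on_top_heap_snoc: "on_top (heap E (c @ [s])) s"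
  by (simp add: on_top_def heap_def)

lemma heap_push_not_on_top:
  "symp E \<Longrightarrow> \<not> on_top (heap E c) s \<Longrightarrow> heap_push E (heap E c) s = heap E (c @ [s])"
  by (simp add: fun_eq_iff heap_push_def heap_snoc)

lemma heap_push_snoc: "symp E \<Longrightarrow> heap_push E (heap E (c @ [s])) s = heap E c"
  using on_top_heap_snoc[of E c s] by (simp add: fun_eq_iff heap_push_def heap_snoc)

lemma on_top_heapD:
  assumes "on_top (heap E c) s"
  shows "\<exists>a b. c = a @ [s] @ b \<and> (\<forall>x\<in>set b. \<not> depends E s x)"
  using assms
proof (induction c rule: rev_induct)
  case (snoc x c)
  show ?case
  proof (cases "depends E s x")
    case True
    with snoc.prems have "x = s" by (simp add: on_top_def heap_def)
    then show ?thesis by (intro exI[of _ c] exI[of _ "[]"]) simp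
  next
    case False
    with snoc.prems have "on_top (heap E c) s" by (simp add: on_top_def heap_def)
    with snoc.IH obtain a b where "c = a @ [s] @ b" "\<forall>x\<in>set b. \<not> depends E s x" by blast
    with False show ?thesis by (intro exI[of _ a] exI[of _ "b @ [x]"]) simp
  qed
qed (simp add: on_top_def)

lemma heap_move_to_end:
  assumes "symp E" and b: "\<forall>x\<in>set b. \<not> depends E s x"
  shows "heap E (a @ [s] @ b) = heap E (a @ b @ [s])"
proof
  fix t
  show "heap E (a @ [s] @ b) t = heap E (a @ b @ [s]) t"
  proof (cases "depends E t s")
    case True
    let ?col = "map (\<lambda>x. x = t) (filter (depends E t) b)"
    have "\<forall>x\<in>set ?col. x = (s = t)"
      using b True depends_sym[OF assms(1)] by (auto simp: depends_def)
    then have "?col = replicate (length ?col) (s = t)" by (intro replicate_eqI) auto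
    then obtain n where "?col = replicate n (s = t)" by blast
    then have "(s = t) # ?col = ?col @ [s = t]" by (simp add: replicate_append_same)
    with True show ?thesis by (simp add: heap_def)
  next
    case False
    then show ?thesis by (simp add: heap_def)
  qed
qed

lemma on_top_heap_split:
  assumes "symp E" and "on_top (heap E c) s"
  obtains c' where "heap E c = heap E (c' @ [s])" "length c = Suc (length c')"
proof -
  obtain a b where c: "c = a @ [s] @ b" and b: "\<forall>x\<in>set b. \<not> depends E s x"
    using on_top_heapD[OF assms(2)] by blast
  show ?thesis
    by (rule that[of "a @ b"]) (use heap_move_to_end[OF assms(1) b, of a] c in simp_all)
qed

fun no_consecutive_Trues :: "bool list \<Rightarrow> bool" where
  "no_consecutive_Trues (x # y # r) \<longleftrightarrow> \<not> (x \<and> y) \<and> no_consecutive_Trues (y # r)"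
| "no_consecutive_Trues _ \<longleftrightarrow> True"

lemma no_consecutive_Trues_snoc:
  "no_consecutive_Trues (l @ [x]) \<longleftrightarrow> no_consecutive_Trues l \<and> \<not> (l \<noteq> [] \<and> last l \<and> x)"
  by (induction l rule: no_consecutive_Trues.induct) auto

text \<open>No piece lies directly on a piece with the same letter.\<close>
definition heap_reduced :: "('a \<Rightarrow> 'a \<Rightarrow> bool) \<Rightarrow> 'a list \<Rightarrow> bool" where
  "heap_reduced E c \<longleftrightarrow> (\<forall>s. no_consecutive_Trues (heap E c s))"

lemma heap_reduced_Nil: "heap_reduced E []"
  by (simp add: heap_reduced_def)

lemma heap_reduced_snoc:
  assumes "symp E"
  shows "heap_reduced E (c @ [s]) \<longleftrightarrow> heap_reduced E c \<and> \<not> on_top (heap E c) s"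
proof -
  have "no_consecutive_Trues (heap E (c @ [s]) t) \<longleftrightarrow>
        no_consecutive_Trues (heap E c t) \<and> \<not> (t = s \<and> on_top (heap E c) s)" for t
    using assms by (auto simp: heap_snoc no_consecutive_Trues_snoc on_top_def depends_def)
  then show ?thesis by (auto simp: heap_reduced_def)
qed

lemma heap_push_involutive:
  assumes "symp E" and "heap_reduced E c"
  shows "heap_push E (heap_push E (heap E c) s) s = heap E c"
proof (cases "on_top (heap E c) s")
  case True
  then obtain c' where c': "heap E c = heap E (c' @ [s])"
    using on_top_heap_split[OF assms(1)] by blast
  have "heap_reduced E (c' @ [s])" using assms(2) c' by (simp add: heap_reduced_def)
  then have "\<not> on_top (heap E c') s" using heap_reduced_snoc[OF assms(1)] by blast
  then show ?thesis
    using c' by (simp add: heap_push_snoc heap_push_not_on_top assms(1))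
next
  case False
  then show ?thesis by (simp add: heap_push_snoc heap_push_not_on_top assms(1))
qed

lemma heap_push_commute_on_top:
  assumes sym: "symp E" and uv: "\<not> depends E u v" and top: "on_top (heap E c) u"
  shows "heap_push E (heap_push E (heap E c) v) u = heap_push E (heap_push E (heap E c) u) v"
proof -
  have vu: "\<not> depends E v u" using uv depends_sym[OF sym] by blast
  obtain c' where c': "heap E c = heap E (c' @ [u])"
    using on_top_heap_split[OF sym top] by blast
  have "heap E c v = heap E c' v" using c' uv by (simp add: heap_snoc sym)
  then have top_v: "on_top (heap E c) v \<longleftrightarrow> on_top (heap E c') v"
    by (simp add: on_top_def)
  have pop_u: "heap_push E (heap E c) u = heap E c'"
    using c' by (simp add: heap_push_snoc sym)
  show ?thesis
  proof (cases "on_top (heap E c) v")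
    case False
    have "heap_push E (heap E c) v = heap E ((c' @ [v]) @ [u])"
      using False heap_snoc_cong[OF sym c', of v] heap_move_to_end[OF sym, of "[v]" u c'] uv
      by (simp add: heap_push_not_on_top sym)
    then show ?thesis
      using False top_v pop_u heap_push_snoc[OF sym, of "c' @ [v]" u]
      by (simp add: heap_push_not_on_top sym)
  next
    case True
    then obtain c'' where c'': "heap E c' = heap E (c'' @ [v])"
      using top_v on_top_heap_split[OF sym] by blast
    have "heap E c = heap E ((c'' @ [u]) @ [v])"
      using c' heap_snoc_cong[OF sym c'', of u] heap_move_to_end[OF sym, of "[u]" v c''] vu
      by simp
    then show ?thesis
      using pop_u c'' heap_push_snoc[OF sym, of "c'' @ [u]" v] by (simp add: heap_push_snoc sym)
  qed
qed

lemma heap_push_commute: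
  assumes sym: "symp E" and uv: "\<not> depends E u v"
  shows "heap_push E (heap_push E (heap E c) v) u = heap_push E (heap_push E (heap E c) u) v"
proof -
  have vu: "\<not> depends E v u" using uv depends_sym[OF sym] by blast
  consider "on_top (heap E c) u" | "on_top (heap E c) v"
    | "\<not> on_top (heap E c) u" "\<not> on_top (heap E c) v" by blast
  then show ?thesis
  proof cases
    case 1
    then show ?thesis using heap_push_commute_on_top[OF sym uv] by blast
  next
    case 2
    then show ?thesis using heap_push_commute_on_top[OF sym vu] by simp
  next
    case 3
    have "\<not> on_top (heap E (c @ [v])) u" "\<not> on_top (heap E (c @ [u])) v"
      using 3 uv vu by (simp_all add: on_top_def heap_snoc sym)
    moreover have "heap E (c @ [v] @ [u]) = heap E (c @ [u] @ [v])"
      using heap_move_to_end[OF sym, of "[v]" u c] uv by simp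
    ultimately show ?thesis
      using 3 by (simp add: heap_push_not_on_top sym)
  qed
qed

lemma heap_nf_append: "heap_nf E (xs @ ys) = foldl (heap_push E) (heap_nf E xs) ys"
  by (simp add: heap_nf_def)

lemma heap_nf_eq_heap:
  assumes sym: "symp E"
  shows "\<exists>c. heap_nf E w = heap E c \<and> heap_reduced E c \<and> length c \<le> length w"
proof (induction w rule: rev_induct)
  case Nil
  show ?case
    by (intro exI[of _ "[]"]) (simp add: heap_nf_def heap_reduced_Nil fun_eq_iff)
next
  case (snoc s w)
  then obtain c where c: "heap_nf E w = heap E c" "heap_reduced E c" "length c \<le> length w"
    by blast
  have nf: "heap_nf E (w @ [s]) = heap_push E (heap E c) s"
    using c(1) by (simp add: heap_nf_append)
  show ?case
  proof (cases "on_top (heap E c) s")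
    case True
    then obtain c' where c': "heap E c = heap E (c' @ [s])" "length c = Suc (length c')"
      using on_top_heap_split[OF sym] by blast
    have "heap_reduced E (c' @ [s])" using c(2) c'(1) by (simp add: heap_reduced_def)
    then have "heap_reduced E c'" using heap_reduced_snoc[OF sym] by blast
    with nf c c' show ?thesis
      by (intro exI[of _ c']) (simp add: heap_push_snoc sym)
  next
    case False
    with nf c show ?thesis
      by (intro exI[of _ "c @ [s]"]) (simp add: heap_push_not_on_top heap_reduced_snoc sym)
  qed
qed

lemma heap_nf_step:
  assumes sym: "symp E" and "racg_step V E w w'"
  shows "heap_nf E w = heap_nf E w'"
  using assms(2)
proof cases
  case (cancel v xs ys)
  obtain c where "heap_nf E xs = heap E c" "heap_reduced E c"
    using heap_nf_eq_heap[OF sym] by blast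
  with cancel show ?thesis
    using heap_push_involutive[OF sym] by (simp add: heap_nf_append)
next
  case (swap u v xs ys)
  obtain c where "heap_nf E xs = heap E c"
    using heap_nf_eq_heap[OF sym] by blast
  moreover have "u = v \<or> \<not> depends E u v" using swap by (auto simp: depends_def)
  ultimately show ?thesis
    using swap heap_push_commute[OF sym, of u v c] by (auto simp: heap_nf_append)
qed

lemma heap_nf_rel:
  assumes sym: "symp E" and "racg_rel V E w w'"
  shows "heap_nf E w = heap_nf E w'"
  using assms(2) unfolding racg_rel_def
proof (induction rule: equivclp_induct)
  case (step y z)
  then show ?case using heap_nf_step[OF sym, of V y z] heap_nf_step[OF sym, of V z y] by auto
qed simp

lemma heap_nf_racg_reduced:
  assumes sym: "symp E"
  shows "racg_reduced E w \<Longrightarrow> heap_nf E w = heap E w"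
proof (induction w rule: rev_induct)
  case Nil
  then show ?case by (simp add: heap_nf_def fun_eq_iff)
next
  case (snoc s w)
  have "\<not> on_top (heap E w) s"
  proof
    assume "on_top (heap E w) s"
    then obtain a b where "w = a @ [s] @ b" "\<forall>x\<in>set b. E s x"
      using on_top_heapD by (fastforce simp: depends_def)
    then have "w @ [s] = a @ s # b @ s # [] \<and> (\<forall>x\<in>set b. E s x)" by simp
    with snoc.prems show False unfolding racg_reduced_def by blast
  qed
  moreover have "heap_nf E w = heap E w"
    using snoc racg_reduced_prefix by blast
  ultimately show ?case
    by (simp add: heap_nf_append heap_push_not_on_top sym)
qed

lemma heap_length_eq:
  assumes "heap E c = heap E d"
  shows "length c = length d"
proof -
  have "count_list c t = length (filter id (heap E c t))" for c t
  proof -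
    have "filter (\<lambda>x. depends E t x \<and> x = t) c = filter (\<lambda>x. t = x) c"
      by (rule filter_cong) auto
    then show ?thesis
      by (simp add: heap_def filter_map comp_def filter_filter count_list_eq_length_filter)
  qed
  with assms have "mset c = mset d"
    by (intro multiset_eqI) (metis count_mset)
  then show ?thesis by (metis size_mset)
qed

theorem racg_reduced_length_le:
  assumes "symp E" and "racg_reduced E d" and "racg_rel V E w d"
  shows "length d \<le> length w"
proof -
  obtain c where c: "heap_nf E w = heap E c" "length c \<le> length w"
    using heap_nf_eq_heap[OF assms(1)] by blast
  have "heap_nf E w = heap E d"
    using heap_nf_rel[OF assms(1,3)] heap_nf_racg_reduced[OF assms(1,2)] by simp
  with c show ?thesis using heap_length_eq by metis
qed

lemma racg_dist_eq_reduced_length: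
  assumes sym: "symp E" and ab: "a \<in> lists V" "b \<in> lists V"
    and c: "c \<in> lists V" "racg_reduced E c" "racg_rel V E (rev a @ b) c"
  shows "racg_dist V E (racg_class V E a) (racg_class V E b) = length c"
proof (rule antisym)
  have "racg_rel V E (a @ c) (a @ rev a @ b)"
    using racg_rel_context[OF racg_rel_sym[OF c(3)], of a "[]"] by simp
  moreover have "racg_rel V E (a @ rev a @ b) b"
    using racg_rel_context[OF racg_rel_rev_cancel[of a V E], of "[]" b] ab by auto
  ultimately show "racg_dist V E (racg_class V E a) (racg_class V E b) \<le> length c"
    using racg_dist_le[OF ab c(1)] racg_rel_trans by blast
next
  obtain w where w: "w \<in> lists V" "racg_rel V E (a @ w) b"
    and len: "length w = racg_dist V E (racg_class V E a) (racg_class V E b)"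
    using racg_dist_witness[OF ab] by blast
  have "racg_rel V E (rev a @ a @ w) w"
    using racg_rel_context[OF racg_rel_rev_cancel[of "rev a" V E], of "[]" w] ab by auto
  moreover have "racg_rel V E (rev a @ a @ w) (rev a @ b)"
    using racg_rel_context[OF w(2), of "rev a" "[]"] by simp
  ultimately have "racg_rel V E w c"
    using c(3) by (metis racg_rel_sym racg_rel_trans)
  then show "length c \<le> racg_dist V E (racg_class V E a) (racg_class V E b)"
    using racg_reduced_length_le[OF sym c(2)] len by metis
qed

section \<open>Substituting fibres\<close>

lemma concat_map_eq_split:
  assumes "concat (map g c) = A @ v # R"
  shows "\<exists>c1 x c2 p q. c = c1 @ x # c2 \<and> g x = p @ v # q
           \<and> A = concat (map g c1) @ p \<and> R = q @ concat (map g c2)"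
  using assms
proof (induction c arbitrary: A)
  case (Cons y c)
  then have "g y @ concat (map g c) = A @ v # R" by simp
  then obtain us where
    "g y = A @ us \<and> us @ concat (map g c) = v # R \<or> g y @ us = A \<and> concat (map g c) = us @ v # R"
    by (auto simp: append_eq_append_conv2)
  then consider (head) q where "g y = A @ v # q" "R = q @ concat (map g c)"
    | (tail) us where "A = g y @ us" "concat (map g c) = us @ v # R"
    by (cases us) auto
  then show ?case
  proof cases
    case head
    then have "y # c = [] @ y # c \<and> g y = A @ v # q \<and> A = concat (map g []) @ A
        \<and> R = q @ concat (map g c)"
      by simp
    then show ?thesis by blast
  next
    case tail
    then obtain c1 x c2 p q where "c = c1 @ x # c2" "g x = p @ v # q"
      "us = concat (map g c1) @ p" "R = q @ concat (map g c2)"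
      using Cons.IH by blast
    with tail show ?thesis by (intro exI[of _ "y # c1"]) auto
  qed
qed simp

lemma concat_map_eq_split_twice:
  assumes "concat (map g c) = A @ v # M @ v # B" and "\<forall>x\<in>set c. distinct (g x)"
  shows "\<exists>c1 x d1 y d2. c = c1 @ x # d1 @ y # d2 \<and> v \<in> set (g x) \<and> v \<in> set (g y)
           \<and> set (concat (map g d1)) \<subseteq> set M"
proof -
  obtain c1 x c2 p q where c: "c = c1 @ x # c2" and x: "g x = p @ v # q"
    and rest: "M @ v # B = q @ concat (map g c2)"
    using concat_map_eq_split[OF assms(1)] by blast
  have "v \<notin> set q" using assms(2) c x by simp
  moreover obtain us where
    "M = q @ us \<and> us @ v # B = concat (map g c2) \<or> M @ us = q \<and> v # B = us @ concat (map g c2)"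
    using rest by (auto simp: append_eq_append_conv2)
  ultimately obtain M' where "M = q @ M'" and "concat (map g c2) = M' @ v # B"
    by (cases us) auto
  moreover from concat_map_eq_split[OF this(2)] obtain d1 y d2 p' q'
    where "c2 = d1 @ y # d2" "g y = p' @ v # q'" "M' = concat (map g d1) @ p'"
    by blast
  ultimately have "c = c1 @ x # d1 @ y # d2 \<and> v \<in> set (g x) \<and> v \<in> set (g y)
      \<and> set (concat (map g d1)) \<subseteq> set M"
    using c x by auto
  then show ?thesis by blast
qed

definition fibre_subst :: "('b \<Rightarrow> 'a) \<Rightarrow> 'b set \<Rightarrow> 'a list \<Rightarrow> 'b list" where
  "fibre_subst f VL w = concat (map (fibre_word f VL) w)"

lemma fibre_subst_Nil [simp]: "fibre_subst f VL [] = []"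
  by (simp add: fibre_subst_def)

lemma fibre_subst_Cons: "fibre_subst f VL (u # w) = fibre_word f VL u @ fibre_subst f VL w"
  by (simp add: fibre_subst_def)

lemma fibre_subst_append [simp]:
  "fibre_subst f VL (a @ b) = fibre_subst f VL a @ fibre_subst f VL b"
  by (simp add: fibre_subst_def)

locale clique_fibration =
  fixes VL :: "'b set" and EL :: "'b \<Rightarrow> 'b \<Rightarrow> bool"
    and VG :: "'a set" and EG :: "'a \<Rightarrow> 'a \<Rightarrow> bool"
    and f :: "'b \<Rightarrow> 'a"
  assumes graph_L: "simple_graph VL EL" and graph_G: "simple_graph VG EG"
    and surj: "f ` VL = VG"
    and full: "\<forall>u1 u2. EG u1 u2 \<longrightarrow>
                 (\<forall>v1\<in>VL. \<forall>v2\<in>VL. f v1 = u1 \<longrightarrow> f v2 = u2 \<longrightarrow> EL v1 v2)"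
    and star: "\<forall>u\<in>VG. \<forall>u'\<in>VG. u \<noteq> u' \<and> \<not> EG u u' \<longrightarrow>
                 (\<forall>v\<in>VL. f v = u \<longrightarrow> (\<exists>v'\<in>VL. f v' = u' \<and> \<not> EL v v'))"
    and cliques: "\<forall>u\<in>VG. is_clique VL EL {v \<in> VL. f v = u}"
begin

lemma symp_EL: "symp EL"
  using graph_L by (auto simp: simple_graph_def intro: sympI)

lemma symp_EG: "symp EG"
  using graph_G by (auto simp: simple_graph_def intro: sympI)

lemma not_EL_refl: "\<not> EL v v"
  using graph_L by (auto simp: simple_graph_def)

lemma fibre_word: "distinct (fibre_word f VL u) \<and> set (fibre_word f VL u) = {v \<in> VL. f v = u}"
proof -
  have "finite {v \<in> VL. f v = u}" using graph_L by (simp add: simple_graph_def)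
  then have "\<exists>xs. distinct xs \<and> set xs = {v \<in> VL. f v = u}"
    using finite_distinct_list by blast
  then show ?thesis unfolding fibre_word_def by (rule someI_ex)
qed

lemma set_fibre_word [simp]: "v \<in> set (fibre_word f VL u) \<longleftrightarrow> v \<in> VL \<and> f v = u"
  using fibre_word by blast

lemma fibre_subst_lists: "fibre_subst f VL w \<in> lists VL"
  by (auto simp: fibre_subst_def)

lemma length_fibre_subst:
  "w \<in> lists VG \<Longrightarrow>
   length w \<le> length (fibre_subst f VL w) \<and> length (fibre_subst f VL w) \<le> card VL * length w"
proof (induction w)
  case (Cons u w)
  have "u \<in> f ` VL" using Cons.prems surj by simp
  then obtain v where "v \<in> VL" "f v = u" by blast
  then have "0 < length (fibre_word f VL u)"
    using length_pos_if_in_set[of v "fibre_word f VL u"] by simp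
  moreover have "length (fibre_word f VL u) \<le> card VL"
  proof -
    have "length (fibre_word f VL u) = card (set (fibre_word f VL u))"
      using fibre_word distinct_card by metis
    also have "\<dots> \<le> card VL"
      using graph_L by (intro card_mono) (auto simp: simple_graph_def)
    finally show ?thesis .
  qed
  ultimately show ?case
    using Cons by (simp add: fibre_subst_Cons del: length_greater_0_conv)
qed simp

lemma fibre_subst_step:
  "racg_step VG EG x y \<Longrightarrow> racg_rel VL EL (fibre_subst f VL x) (fibre_subst f VL y)"
proof (induction rule: racg_step.induct)
  case (cancel u xs ys)
  let ?l = "fibre_word f VL u"
  have "racg_rel VL EL (?l @ ?l) []"
    using cancel cliques fibre_word by (intro racg_rel_clique_square) (auto simp: is_clique_def)
  then show ?case
    using racg_rel_context[of VL EL "?l @ ?l" "[]" "fibre_subst f VL xs" "fibre_subst f VL ys"]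
    by (simp add: fibre_subst_Cons)
next
  case (swap u v xs ys)
  let ?l1 = "fibre_word f VL u" and ?l2 = "fibre_word f VL v"
  have "racg_rel VL EL (?l1 @ ?l2) (?l2 @ ?l1)"
    using swap full by (intro racg_rel_commute_blocks) auto
  then show ?case
    using racg_rel_context[of VL EL "?l1 @ ?l2" "?l2 @ ?l1"
        "fibre_subst f VL xs" "fibre_subst f VL ys"]
    by (simp add: fibre_subst_Cons)
qed

lemma fibre_subst_rel:
  "racg_rel VG EG x y \<Longrightarrow> racg_rel VL EL (fibre_subst f VL x) (fibre_subst f VL y)"
  by (rule racg_rel_map[OF fibre_subst_step])

lemma fibre_subst_rev:
  assumes "w \<in> lists VG"
  shows "racg_rel VL EL (fibre_subst f VL (rev w)) (rev (fibre_subst f VL w))"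
proof (rule racg_rel_inverse_unique)
  show "set (fibre_subst f VL w) \<subseteq> VL" using fibre_subst_lists by blast
  have "racg_rel VG EG (rev w @ w) []"
    using racg_rel_rev_cancel[of "rev w" VG EG] assms by auto
  then show "racg_rel VL EL (fibre_subst f VL (rev w) @ fibre_subst f VL w) []"
    using fibre_subst_rel by fastforce
qed

text \<open>The two letters of a cancellable pair v ... v in the image come from two occurrences
of f v in c, and by (*) every letter of c between them commutes with f v.\<close>
lemma racg_reduced_fibre_subst:
  assumes c: "c \<in> lists VG" and reduced: "racg_reduced EG c"
  shows "racg_reduced EL (fibre_subst f VL c)"
  unfolding racg_reduced_def
proof
  assume "\<exists>A v M B. fibre_subst f VL c = A @ v # M @ v # B \<and> (\<forall>y\<in>set M. EL v y)"
  then obtain A v M B where "concat (map (fibre_word f VL) c) = A @ v # M @ v # B"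
    and M: "\<forall>y\<in>set M. EL v y"
    by (auto simp: fibre_subst_def)
  then obtain c1 x d1 y d2 where c_eq: "c = c1 @ x # d1 @ y # d2"
    and "v \<in> set (fibre_word f VL x)" "v \<in> set (fibre_word f VL y)"
    and sub: "set (concat (map (fibre_word f VL) d1)) \<subseteq> set M"
    using concat_map_eq_split_twice fibre_word by meson
  then have v: "v \<in> VL" "x = f v" "y = f v" by simp_all
  have fv: "f v \<in> VG" using surj v by blast
  have "EG (f v) z" if "z \<in> set d1" for z
  proof (rule ccontr)
    assume nE: "\<not> EG (f v) z"
    have z: "z \<in> VG" using c c_eq that by auto
    have sub_z: "set (fibre_word f VL z) \<subseteq> set M" using that sub by auto
    show False
    proof (cases "z = f v")
      case True
      then have "v \<in> set M" using sub_z v(1) by auto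
      with M not_EL_refl show False by blast
    next
      case False
      with nE have "f v \<noteq> z \<and> \<not> EG (f v) z" by auto
      then obtain v' where "v' \<in> VL" "f v' = z" "\<not> EL v v'"
        using star fv z v(1) by blast
      then show False using sub_z M by auto
    qed
  qed
  moreover have "c = c1 @ f v # d1 @ f v # d2" using c_eq v by simp
  ultimately show False using reduced unfolding racg_reduced_def by blast
qed

definition embedding :: "'a list set \<Rightarrow> 'b list set" where
  "embedding = racg_lift (fibre_subst f VL) VG EG VL EL"

lemma embedding_class:
  "w \<in> lists VG \<Longrightarrow> embedding (racg_class VG EG w) = racg_class VL EL (fibre_subst f VL w)"
  unfolding embedding_def by (rule racg_lift_class[OF fibre_subst_rel])

lemma embedding_hom: "embedding \<in> hom (RACG VG EG) (RACG VL EL)"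
  unfolding embedding_def
  by (rule racg_lift_hom[OF fibre_subst_rel]) (simp_all add: fibre_subst_lists)

lemma embedding_gen:
  "u \<in> VG \<Longrightarrow> embedding (racg_gen VG EG u) = racg_class VL EL (fibre_word f VL u)"
  by (simp add: racg_gen_def embedding_class fibre_subst_Cons)

lemma racg_dist_embedding:
  assumes "g \<in> carrier (RACG VG EG)" "h \<in> carrier (RACG VG EG)"
  shows "racg_dist VG EG g h \<le> racg_dist VL EL (embedding g) (embedding h)
         \<and> racg_dist VL EL (embedding g) (embedding h) \<le> card VL * racg_dist VG EG g h"
proof -
  obtain a b where ab: "a \<in> lists VG" "g = racg_class VG EG a" "b \<in> lists VG" "h = racg_class VG EG b"
    using assms by (auto simp: carrier_RACG)
  then have "rev a @ b \<in> lists VG" by auto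
  then obtain c where c: "c \<in> lists VG" "racg_rel VG EG (rev a @ b) c" "racg_reduced EG c"
    by (rule racg_reduced_exists)
  have dist_G: "racg_dist VG EG g h = length c"
    using racg_dist_eq_reduced_length[OF symp_EG ab(1,3) c(1,3,2)] ab by simp
  let ?\<Phi> = "fibre_subst f VL"
  have "racg_rel VL EL (rev (?\<Phi> a) @ ?\<Phi> b) (?\<Phi> (rev a) @ ?\<Phi> b)"
    using racg_rel_append[OF racg_rel_sym[OF fibre_subst_rev[OF ab(1)]] racg_rel_refl] .
  moreover have "racg_rel VL EL (?\<Phi> (rev a) @ ?\<Phi> b) (?\<Phi> c)"
    using fibre_subst_rel[OF c(2)] by simp
  ultimately have "racg_rel VL EL (rev (?\<Phi> a) @ ?\<Phi> b) (?\<Phi> c)"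
    by (rule racg_rel_trans)
  then have dist_L: "racg_dist VL EL (embedding g) (embedding h) = length (?\<Phi> c)"
    using racg_dist_eq_reduced_length[OF symp_EL fibre_subst_lists fibre_subst_lists
        fibre_subst_lists racg_reduced_fibre_subst[OF c(1,3)]] ab
    by (simp add: embedding_class)
  show ?thesis using length_fibre_subst[OF c(1)] dist_G dist_L by simp
qed

lemma inj_on_embedding: "inj_on embedding (carrier (RACG VG EG))"
proof (rule inj_onI)
  fix g h assume g: "g \<in> carrier (RACG VG EG)" and h: "h \<in> carrier (RACG VG EG)"
    and eq: "embedding g = embedding h"
  have "embedding g \<in> carrier (RACG VL EL)" using embedding_hom g by (rule hom_in_carrier)
  then have "racg_dist VL EL (embedding g) (embedding h) = 0"
    using eq racg_dist_eq_0_iff by metis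
  then have "racg_dist VG EG g h = 0" using racg_dist_embedding[OF g h] by simp
  then show "g = h" using racg_dist_eq_0_iff[OF g h] by blast
qed

lemma embedding_quasi_isometric:
  "\<exists>K C::real. K \<ge> 1 \<and> C \<ge> 0 \<and>
     (\<forall>g\<in>carrier (RACG VG EG). \<forall>h\<in>carrier (RACG VG EG).
        real (racg_dist VG EG g h) / K - C \<le> real (racg_dist VL EL (embedding g) (embedding h))
      \<and> real (racg_dist VL EL (embedding g) (embedding h)) \<le> K * real (racg_dist VG EG g h) + C)"
proof (rule exI[of _ "real (card VL) + 1"], rule exI[of _ 0], intro conjI ballI)
  fix g h assume "g \<in> carrier (RACG VG EG)" "h \<in> carrier (RACG VG EG)"
  then have "racg_dist VG EG g h \<le> racg_dist VL EL (embedding g) (embedding h)"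
    "racg_dist VL EL (embedding g) (embedding h) \<le> card VL * racg_dist VG EG g h"
    using racg_dist_embedding by blast+
  then have "real (racg_dist VG EG g h) \<le> real (racg_dist VL EL (embedding g) (embedding h))"
    "real (racg_dist VL EL (embedding g) (embedding h)) \<le> real (card VL) * real (racg_dist VG EG g h)"
    by (simp_all flip: of_nat_mult)
  moreover have "real (racg_dist VG EG g h) / (real (card VL) + 1) \<le> real (racg_dist VG EG g h)"
    by (simp add: divide_le_eq mult_le_cancel_left1)
  ultimately show
    "real (racg_dist VG EG g h) / (real (card VL) + 1) - 0 \<le> real (racg_dist VL EL (embedding g) (embedding h))"
    "real (racg_dist VL EL (embedding g) (embedding h)) \<le> (real (card VL) + 1) * real (racg_dist VG EG g h) + 0"
    by (simp_all add: distrib_right)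
qed simp_all

end

theorem proposition6p2:
  fixes VL :: "'b set" and EL :: "'b \<Rightarrow> 'b \<Rightarrow> bool"
    and VG :: "'a set" and EG :: "'a \<Rightarrow> 'a \<Rightarrow> bool"
    and f :: "'b \<Rightarrow> 'a"
  assumes "simple_graph VL EL" and "simple_graph VG EG"
    and surj: "f ` VL = VG"
    and full: "\<forall>u1 u2. EG u1 u2 \<longrightarrow>
                 (\<forall>v1\<in>VL. \<forall>v2\<in>VL. f v1 = u1 \<longrightarrow> f v2 = u2 \<longrightarrow> EL v1 v2)"
    and star: "\<forall>u\<in>VG. \<forall>u'\<in>VG. u \<noteq> u' \<and> \<not> EG u u' \<longrightarrow>
                 (\<forall>v\<in>VL. f v = u \<longrightarrow> (\<exists>v'\<in>VL. f v' = u' \<and> \<not> EL v v'))"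
    and cliques: "\<forall>u\<in>VG. is_clique VL EL {v \<in> VL. f v = u}"
  shows "\<exists>\<phi>. \<phi> \<in> hom (RACG VG EG) (RACG VL EL)
          \<and> (\<forall>u\<in>VG. \<phi> (racg_gen VG EG u) = racg_class VL EL (fibre_word f VL u))
          \<and> inj_on \<phi> (carrier (RACG VG EG))
          \<and> (\<exists>K C::real. K \<ge> 1 \<and> C \<ge> 0 \<and>
               (\<forall>g\<in>carrier (RACG VG EG). \<forall>h\<in>carrier (RACG VG EG).
                  real (racg_dist VG EG g h) / K - C \<le> real (racg_dist VL EL (\<phi> g) (\<phi> h))
                \<and> real (racg_dist VL EL (\<phi> g) (\<phi> h)) \<le> K * real (racg_dist VG EG g h) + C))"
proof -
  interpret clique_fibration VL EL VG EG f
    by (rule clique_fibration.intro) (fact assms)+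
  show ?thesis
  proof (intro exI[of _ embedding] conjI ballI)
    show "embedding (racg_gen VG EG u) = racg_class VL EL (fibre_word f VL u)" if "u \<in> VG" for u
      using that by (rule embedding_gen)
  qed (rule embedding_hom inj_on_embedding embedding_quasi_isometric)+
qed

end
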